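(* Let $A=\{-1,+1\}$, $\sigma\in(0,1)$, and let $P$ be a kernel on $A$ whose probabilistic skeleton $(\tau^\sigma,p)$ with respect to $\tau^\sigma$ satisfies $\inf_{v\in\tau^\sigma}p(1|v)>\sigma$. Then $(\tau^\sigma,p)$ is good, and its good coalescence time $\bar\theta[0]$ has exponential tail.
   Context: A past is $\underline a=\ldots a_{-2}a_{-1}\in A^{-\mathbb N}$; concatenation puts the older part on the left ($\underline z\,v$ is the past ending with the finite string $v$, preceded by $\underline z$). A kernel is $P:A\times A^{-\mathbb N}\to[0,1]$ with $\sum_aP(a|\underline a)=1$; $\alpha(a):=\inf_{\underline z}P(a|\underline z)$, $\alpha_{-1}:=\alpha(-1)+\alpha(1)$. For a past $\underline a$, $T_\sigma(\underline a):=\inf\{k\ge1:\frac1k\sum_{i=1}^k\mathbf 1\{a_{-i}=1\}\ge\sigma\}$ ($=+\infty$ if the set is empty). $\tau^\sigma$ is the set consisting of the finite strings $a_{-T_\sigma(\underline a)}^{-1}$ for pasts with $T_\sigma(\underline a)<\infty$ together with the pasts $\underline a$ with $T_\sigma(\underline a)=\infty$; it is a context tree: every past has exactly one element of $\tau^\sigma$ as suffix, denoted $c_{\tau^\sigma}(\underline a)$. The probabilistic skeleton is $(\tau^\sigma,p)$ with $p(a|v):=\inf_{\underline z}P(a|\underline z v)$ for finite $v\in\tau^\sigma$ and $p(a|v):=P(a|v)$ for infinite $v$. $\mathbf U=(U_i)_{i\in\mathbb Z}$ i.i.d. uniform on $[0,1)$. With $A$ enumerated in a fixed order $a^{(1)},a^{(2)}$,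 $Y_i:=a^{(1)}$ if $U_i<\alpha(a^{(1)})$, $Y_i:=a^{(2)}$ if $\alpha(a^{(1)})\le U_i<\alpha_{-1}$, $Y_i:=\star$ if $U_i\ge\alpha_{-1}$. For $\mathbf a\in A^{\mathbb Z}$, $Y_i(\mathbf a):=Y_i$ if $Y_i\in A$, else $a_i$. $c^n_\tau:=\sup_{\mathbf a}|c_{\tau^\sigma}(\ldots Y_{n-1}(\mathbf a)Y_n(\mathbf a))|$. $\bar\theta[m]:=\sup\{i\le m:\forall j\in\{i,\dots,m\},\ Y_j\in A\text{ or }c^j_\tau\le j-i\}$ (sup of empty set $=-\infty$) is the good coalescence time; $(\tau^\sigma,p)$ is good if $\mathbb E|\bar\theta[0]|<\infty$. Exponential tail: $\mathbb P(|W|\ge n)\le Dd^n$ for some $D>0$, $0<d<1$. *)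

theory Defs
  imports "HOL-Probability.Probability"
begin

definition symA :: "int set" where "symA = {-1, 1}"

text \<open>A past a = ... a_{-2} a_{-1} is represented as z :: nat => int with z k = a_{-(k+1)}.\<close>
definition pasts :: "(nat \<Rightarrow> int) set" where
  "pasts = {z. \<forall>k. z k \<in> symA}"

definition biseqs :: "(int \<Rightarrow> int) set" where
  "biseqs = {a. \<forall>i. a i \<in> symA}"

text \<open>Finite strings are lists in chronological order (oldest first, last element = a_{-1}).
  concat_past z v is the past z v ending with v, preceded by z.\<close>
definition concat_past :: "(nat \<Rightarrow> int) \<Rightarrow> int list \<Rightarrow> (nat \<Rightarrow> int)" where
  "concat_past z v = (\<lambda>k. if k < length v then v ! (length v - 1 - k) else z (k - length v))"

definition is_kernel :: "(int \<Rightarrow> (nat \<Rightarrow> int) \<Rightarrow> real) \<Rightarrow> bool" where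
  "is_kernel P \<longleftrightarrow> (\<forall>z\<in>pasts. (\<forall>a\<in>symA. 0 \<le> P a z \<and> P a z \<le> 1) \<and> (\<Sum>a\<in>symA. P a z) = 1)"

definition alpha :: "(int \<Rightarrow> (nat \<Rightarrow> int) \<Rightarrow> real) \<Rightarrow> int \<Rightarrow> real" where
  "alpha P a = (INF z\<in>pasts. P a z)"

definition alpha_m1 :: "(int \<Rightarrow> (nat \<Rightarrow> int) \<Rightarrow> real) \<Rightarrow> real" where
  "alpha_m1 P = alpha P (-1) + alpha P 1"

definition T_sigma :: "real \<Rightarrow> (nat \<Rightarrow> int) \<Rightarrow> enat" where
  "T_sigma \<sigma> a = Inf {enat k | k. k \<ge> 1 \<and>
      (\<Sum>i<k. (if a i = 1 then 1 else 0 :: real)) / real k \<ge> \<sigma>}"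

text \<open>Elements of a context tree: finite strings (Inl) or pasts (Inr).\<close>
type_synonym ctx = "int list + (nat \<Rightarrow> int)"

text \<open>The finite string a_{-n}^{-1} (chronological order).\<close>
definition suffix_string :: "(nat \<Rightarrow> int) \<Rightarrow> nat \<Rightarrow> int list" where
  "suffix_string a n = rev (map a [0..<n])"

definition tau :: "real \<Rightarrow> ctx set" where
  "tau \<sigma> = {Inl (suffix_string a n) | a n. a \<in> pasts \<and> T_sigma \<sigma> a = enat n}
          \<union> {Inr a | a. a \<in> pasts \<and> T_sigma \<sigma> a = \<infinity>}"

definition c_tau :: "real \<Rightarrow> (nat \<Rightarrow> int) \<Rightarrow> ctx" where
  "c_tau \<sigma> a = (case T_sigma \<sigma> a of enat n \<Rightarrow> Inl (suffix_string a n) | \<infinity> \<Rightarrow> Inr a)"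

definition ctx_len :: "ctx \<Rightarrow> enat" where
  "ctx_len c = (case c of Inl v \<Rightarrow> enat (length v) | Inr _ \<Rightarrow> \<infinity>)"

definition skel_p :: "(int \<Rightarrow> (nat \<Rightarrow> int) \<Rightarrow> real) \<Rightarrow> int \<Rightarrow> ctx \<Rightarrow> real" where
  "skel_p P a c = (case c of Inl v \<Rightarrow> (INF z\<in>pasts. P a (concat_past z v)) | Inr u \<Rightarrow> P a u)"

text \<open>Y_i from U_i, with enumeration a1, a2 of A; None stands for the symbol star.\<close>
definition Yvar :: "(int \<Rightarrow> (nat \<Rightarrow> int) \<Rightarrow> real) \<Rightarrow> int \<Rightarrow> int \<Rightarrow> real \<Rightarrow> int option" where
  "Yvar P a1 a2 u = (if u < alpha P a1 then Some a1
                     else if u < alpha_m1 P then Some a2 else None)"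

definition Yfill :: "(int \<Rightarrow> int option) \<Rightarrow> (int \<Rightarrow> int) \<Rightarrow> int \<Rightarrow> int" where
  "Yfill y a i = (case y i of Some b \<Rightarrow> b | None \<Rightarrow> a i)"

definition c_n :: "real \<Rightarrow> (int \<Rightarrow> int option) \<Rightarrow> int \<Rightarrow> enat" where
  "c_n \<sigma> y n = (SUP a\<in>biseqs. ctx_len (c_tau \<sigma> (\<lambda>k. Yfill y a (n - int k))))"

text \<open>Good coalescence time; sup of the empty set is -infinity.\<close>
definition theta_bar :: "real \<Rightarrow> (int \<Rightarrow> int option) \<Rightarrow> int \<Rightarrow> ereal" where
  "theta_bar \<sigma> y m = Sup ((\<lambda>i. ereal (real_of_int i)) `
      {i. i \<le> m \<and> (\<forall>j\<in>{i..m}. y j \<noteq> None \<or> c_n \<sigma> y j \<le> enat (nat (j - i)))})"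

end

theory Submission
  imports Defs
begin

(* Read the past backwards from time 0 and let W k = sum_{t<k} (1{Y_{-t} = 1} - sigma). If Y_{-j}
   is a symbol and W j is a running maximum of W, then for every t in [-j, 0] the window of the
   last t + j symbols before t contains a fraction >= sigma of ones however the unobserved positions
   are filled in, so c^t_tau <= t + j and -j is a good time. Hence |theta[0]| >= n forces the deficit
   D_k = max_{l<=k} W l - W k to find an unobserved position whenever it vanishes during the first
   n steps. The hypothesis on the skeleton gives P(Y_i = 1) = alpha(1) > sigma, so W drifts upwards
   and exp(eta (D + 1 - sigma)), taken to be 1 at D = 0, contracts by a factor rho < 1 along the
   surviving paths: P(|theta[0]| >= n) <= rho^n. *)

lemma constant_past_in_pasts: "(\<lambda>_. 1) \<in> pasts"
  by (simp add: pasts_def symA_def)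

lemma concat_past_in_pasts: "z \<in> pasts \<Longrightarrow> set v \<subseteq> symA \<Longrightarrow> concat_past z v \<in> pasts"
  by (auto simp: pasts_def concat_past_def)

lemma kernel_nonneg: "is_kernel P \<Longrightarrow> a \<in> symA \<Longrightarrow> z \<in> pasts \<Longrightarrow> 0 \<le> P a z"
  by (simp add: is_kernel_def)

lemma alpha_nonneg: "is_kernel P \<Longrightarrow> a \<in> symA \<Longrightarrow> 0 \<le> alpha P a"
  unfolding alpha_def using constant_past_in_pasts by (intro cINF_greatest) (auto simp: kernel_nonneg)

lemma alpha_le: "is_kernel P \<Longrightarrow> a \<in> symA \<Longrightarrow> z \<in> pasts \<Longrightarrow> alpha P a \<le> P a z"
  unfolding alpha_def by (intro cINF_lower) (auto simp: bdd_below_def kernel_nonneg intro!: exI[of _ 0])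

lemma alpha_m1_le_one:
  assumes "is_kernel P"
  shows "alpha_m1 P \<le> 1"
proof -
  have "P (-1) (\<lambda>_. 1) + P 1 (\<lambda>_. 1) = 1"
    using assms constant_past_in_pasts by (simp add: is_kernel_def symA_def)
  moreover have "alpha P a \<le> P a (\<lambda>_. 1)" if "a \<in> symA" for a
    using alpha_le[OF assms that constant_past_in_pasts] .
  ultimately have "alpha P (-1) + alpha P 1 \<le> P (-1) (\<lambda>_. 1) + P 1 (\<lambda>_. 1)"
    by (intro add_mono) (auto simp: symA_def)
  with \<open>P (-1) (\<lambda>_. 1) + P 1 (\<lambda>_. 1) = 1\<close> show ?thesis by (simp add: alpha_m1_def)
qed

lemma alpha_m1_eq:
  assumes "symA = {a1, a2}" and "a1 \<noteq> a2"
  shows "alpha_m1 P = alpha P a1 + alpha P a2"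
  using assms by (auto simp: alpha_m1_def symA_def doubleton_eq_iff)

lemma set_suffix_string_subset: "z \<in> pasts \<Longrightarrow> set (suffix_string z n) \<subseteq> symA"
  by (auto simp: suffix_string_def pasts_def)

lemma c_tau_in_tau: "z \<in> pasts \<Longrightarrow> c_tau \<sigma> z \<in> tau \<sigma>"
  by (cases "T_sigma \<sigma> z") (auto simp: c_tau_def tau_def)

lemma concat_past_suffix_string: "concat_past (\<lambda>k. z (k + n)) (suffix_string z n) = z"
  by (auto simp: concat_past_def suffix_string_def rev_nth)

lemma skel_p_c_tau_le:
  assumes "is_kernel P" "a \<in> symA" "z \<in> pasts"
  shows "skel_p P a (c_tau \<sigma> z) \<le> P a z"
proof (cases "T_sigma \<sigma> z")
  case (enat n)
  let ?v = "suffix_string z n"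
  have "(\<lambda>k. z (k + n)) \<in> pasts"
    using assms(3) by (simp add: pasts_def)
  then have "(INF z'\<in>pasts. P a (concat_past z' ?v)) \<le> P a (concat_past (\<lambda>k. z (k + n)) ?v)"
    using assms set_suffix_string_subset
    by (intro cINF_lower) (auto simp: bdd_below_def concat_past_in_pasts kernel_nonneg intro!: exI[of _ 0])
  then show ?thesis
    using enat by (simp add: c_tau_def skel_p_def concat_past_suffix_string)
qed (simp add: c_tau_def skel_p_def)

lemma skel_p_nonneg:
  assumes "is_kernel P" "a \<in> symA" "c \<in> tau \<sigma>"
  shows "0 \<le> skel_p P a c"
proof (cases rule: Set.UnE[OF assms(3)[unfolded tau_def]])
  case 1
  then obtain z n where "z \<in> pasts" "c = Inl (suffix_string z n)" by auto
  then show ?thesis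
    using assms constant_past_in_pasts set_suffix_string_subset
    by (auto simp: skel_p_def kernel_nonneg concat_past_in_pasts intro!: cINF_greatest)
qed (use assms in \<open>auto simp: skel_p_def kernel_nonneg\<close>)

lemma INF_skel_p_le_alpha:
  assumes "is_kernel P" "a \<in> symA"
  shows "(INF c\<in>tau \<sigma>. skel_p P a c) \<le> alpha P a"
  unfolding alpha_def
proof (rule cINF_greatest)
  fix z assume z: "z \<in> pasts"
  have "bdd_below (skel_p P a ` tau \<sigma>)"
    using skel_p_nonneg[OF assms] by (auto simp: bdd_below_def)
  then have "(INF c\<in>tau \<sigma>. skel_p P a c) \<le> skel_p P a (c_tau \<sigma> z)"
    using z by (intro cINF_lower c_tau_in_tau)
  also have "\<dots> \<le> P a z" by (rule skel_p_c_tau_le[OF assms z])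
  finally show "(INF c\<in>tau \<sigma>. skel_p P a c) \<le> P a z" .
qed (use constant_past_in_pasts in auto)

section \<open>The reflected walk and its exponential Lyapunov function\<close>

definition one_indicator :: "int option \<Rightarrow> real" where
  "one_indicator v = (if v = Some 1 then 1 else 0)"

text \<open>The list holds the symbols \<open>Y\<^sub>0, Y\<^sub>-\<^sub>1, \<dots>\<close> and \<open>D\<close> is the deficit of the walk below its running
  maximum; the walk avoids observed ladder times if, whenever the deficit vanishes, the symbol is \<open>\<star>\<close>.\<close>

fun avoids_ladder :: "real \<Rightarrow> real \<Rightarrow> int option list \<Rightarrow> bool" where
  "avoids_ladder \<sigma> D [] = True"
| "avoids_ladder \<sigma> D (v # vs) \<longleftrightarrow>
     (0 < D \<or> v = None) \<and> avoids_ladder \<sigma> (max (D - one_indicator v + \<sigma>) 0) vs"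

definition lists_of_length :: "'a set \<Rightarrow> nat \<Rightarrow> 'a list set" where
  "lists_of_length V n = {xs. set xs \<subseteq> V \<and> length xs = n}"

lemma finite_lists_of_length: "finite V \<Longrightarrow> finite (lists_of_length V n)"
  unfolding lists_of_length_def by (rule finite_lists_length_eq)

lemma lists_of_length_0 [simp]: "lists_of_length V 0 = {[]}"
  by (auto simp: lists_of_length_def)

lemma sum_lists_of_length_Suc:
  assumes "finite V"
  shows "(\<Sum>xs\<in>lists_of_length V (Suc n). h xs) = (\<Sum>v\<in>V. \<Sum>vs\<in>lists_of_length V n. h (v # vs))"
proof -
  have "(\<Sum>xs\<in>lists_of_length V (Suc n). h xs)
      = (\<Sum>xs\<in>(\<lambda>(xs, v). v # xs) ` (lists_of_length V n \<times> V). h xs)"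
    unfolding lists_of_length_def lists_length_Suc_eq ..
  also have "\<dots> = (\<Sum>(vs, v)\<in>lists_of_length V n \<times> V. h (v # vs))"
    by (subst sum.reindex) (auto simp: inj_on_def split_beta intro!: sum.cong)
  also have "\<dots> = (\<Sum>v\<in>V. \<Sum>vs\<in>lists_of_length V n. h (v # vs))"
    by (simp add: sum.cartesian_product[symmetric] sum.swap[of _ V])
  finally show ?thesis .
qed

definition avoid_weight :: "int option set \<Rightarrow> (int option \<Rightarrow> real) \<Rightarrow> real \<Rightarrow> nat \<Rightarrow> real \<Rightarrow> real" where
  "avoid_weight V p \<sigma> n D =
     (\<Sum>vs\<in>lists_of_length V n. if avoids_ladder \<sigma> D vs then prod_list (map p vs) else 0)"

lemma avoid_weight_0: "avoid_weight V p \<sigma> 0 D = 1"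
  by (simp add: avoid_weight_def)

lemma avoid_weight_Suc:
  assumes "finite V"
  shows "avoid_weight V p \<sigma> (Suc n) D =
    (\<Sum>v\<in>V. if 0 < D \<or> v = None then p v * avoid_weight V p \<sigma> n (max (D - one_indicator v + \<sigma>) 0) else 0)"
  unfolding avoid_weight_def sum_lists_of_length_Suc[OF assms]
  by (intro sum.cong refl) (auto simp: sum_distrib_left intro!: sum.cong)

definition ladder_lyapunov :: "real \<Rightarrow> real \<Rightarrow> real \<Rightarrow> real" where
  "ladder_lyapunov \<eta> \<sigma> D = (if D \<le> 0 then 1 else exp (\<eta> * (D + 1 - \<sigma>)))"

lemma one_le_ladder_lyapunov: "0 \<le> \<eta> \<Longrightarrow> \<sigma> \<le> 1 \<Longrightarrow> 1 \<le> ladder_lyapunov \<eta> \<sigma> D"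
  by (simp add: ladder_lyapunov_def)

lemma ladder_lyapunov_max_le:
  assumes "0 \<le> \<eta>" "0 \<le> x + 1 - \<sigma>"
  shows "ladder_lyapunov \<eta> \<sigma> (max x 0) \<le> exp (\<eta> * (x + 1 - \<sigma>))"
  using assms by (simp add: ladder_lyapunov_def)

lemma ladder_lyapunov_step_le:
  assumes "0 \<le> \<eta>" "0 < D"
  shows "ladder_lyapunov \<eta> \<sigma> (max (D - one_indicator v + \<sigma>) 0)
    \<le> (if v = Some 1 then exp (\<eta> * D) else exp (\<eta> * (D + 1)))"
proof (cases "v = Some 1")
  case True
  then show ?thesis
    using ladder_lyapunov_max_le[of \<eta> "D - 1 + \<sigma>" \<sigma>] assms by (simp add: one_indicator_def)
next
  case False
  then show ?thesis
    using ladder_lyapunov_max_le[of \<eta> "D + \<sigma>" \<sigma>] assms by (simp add: one_indicator_def)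
qed

lemma ladder_lyapunov_drift:
  assumes "finite V" "\<And>v. v \<in> V \<Longrightarrow> 0 \<le> p v" "(\<Sum>v\<in>V. p v) = 1" "Some 1 \<in> V" "None \<in> V"
    and "0 \<le> \<eta>"
    and up: "p (Some 1) * exp (- \<eta> * (1 - \<sigma>)) + (1 - p (Some 1)) * exp (\<eta> * \<sigma>) \<le> \<rho>"
    and stay: "p None * exp \<eta> \<le> \<rho>"
  shows "(\<Sum>v\<in>V. if 0 < D \<or> v = None
            then p v * ladder_lyapunov \<eta> \<sigma> (max (D - one_indicator v + \<sigma>) 0) else 0)
         \<le> \<rho> * ladder_lyapunov \<eta> \<sigma> D"
proof (cases "0 < D")
  case True
  let ?up = "exp (\<eta> * D)" and ?down = "exp (\<eta> * (D + 1))"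
  have "(\<Sum>v\<in>V. if 0 < D \<or> v = None
            then p v * ladder_lyapunov \<eta> \<sigma> (max (D - one_indicator v + \<sigma>) 0) else 0)
      \<le> (\<Sum>v\<in>V. p v * (if v = Some 1 then ?up else ?down))"
  proof (rule sum_mono)
    fix v assume "v \<in> V"
    from True have "0 < D \<or> v = None" ..
    show "(if 0 < D \<or> v = None
            then p v * ladder_lyapunov \<eta> \<sigma> (max (D - one_indicator v + \<sigma>) 0) else 0)
        \<le> p v * (if v = Some 1 then ?up else ?down)"
      unfolding if_P[OF \<open>0 < D \<or> v = None\<close>]
      by (rule mult_left_mono[OF ladder_lyapunov_step_le assms(2)[OF \<open>v \<in> V\<close>]])
        (use True \<open>0 \<le> \<eta>\<close> in auto)
  qed
  also have "\<dots> = p (Some 1) * ?up + (\<Sum>v\<in>V - {Some 1}. p v * ?down)"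
    using assms(1,4) by (simp add: sum.remove)
  also have "\<dots> = p (Some 1) * ?up + (1 - p (Some 1)) * ?down"
    using assms(1,3,4) by (simp add: sum_diff1 flip: sum_distrib_right)
  also have "\<dots> = exp (\<eta> * (D + 1 - \<sigma>)) * (p (Some 1) * exp (- \<eta> * (1 - \<sigma>)) + (1 - p (Some 1)) * exp (\<eta> * \<sigma>))"
    by (simp add: algebra_simps flip: exp_add)
  also have "\<dots> \<le> \<rho> * ladder_lyapunov \<eta> \<sigma> D"
    using True up by (simp add: ladder_lyapunov_def)
  finally show ?thesis .
next
  case False
  have "(\<Sum>v\<in>V. if 0 < D \<or> v = None
            then p v * ladder_lyapunov \<eta> \<sigma> (max (D - one_indicator v + \<sigma>) 0) else 0)
      = p None * ladder_lyapunov \<eta> \<sigma> (max (D + \<sigma>) 0)"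
    using False assms(1,5) by (simp add: sum.delta' one_indicator_def)
  also have "\<dots> \<le> p None * exp \<eta>"
    using False assms(2,5,6) by (intro mult_left_mono) (auto simp: ladder_lyapunov_def mult_left_le)
  also have "\<dots> \<le> \<rho> * ladder_lyapunov \<eta> \<sigma> D"
    using False stay unfolding ladder_lyapunov_def by simp
  finally show ?thesis .
qed

lemma avoid_weight_le_lyapunov:
  assumes "finite V" "\<And>v. v \<in> V \<Longrightarrow> 0 \<le> p v" "(\<Sum>v\<in>V. p v) = 1" "Some 1 \<in> V" "None \<in> V"
    and "0 \<le> \<eta>" "\<sigma> \<le> 1"
    and "p (Some 1) * exp (- \<eta> * (1 - \<sigma>)) + (1 - p (Some 1)) * exp (\<eta> * \<sigma>) \<le> \<rho>"
    and "p None * exp \<eta> \<le> \<rho>"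
  shows "avoid_weight V p \<sigma> n D \<le> \<rho> ^ n * ladder_lyapunov \<eta> \<sigma> D"
proof (induction n arbitrary: D)
  case 0
  show ?case by (simp add: avoid_weight_0 one_le_ladder_lyapunov assms)
next
  case (Suc n)
  have "0 \<le> \<rho>"
    using assms(2,5,9) by (meson exp_ge_zero mult_nonneg_nonneg order_trans)
  have "avoid_weight V p \<sigma> (Suc n) D
      \<le> (\<Sum>v\<in>V. if 0 < D \<or> v = None
            then p v * (\<rho> ^ n * ladder_lyapunov \<eta> \<sigma> (max (D - one_indicator v + \<sigma>) 0)) else 0)"
    unfolding avoid_weight_Suc[OF assms(1)] using Suc.IH assms(2)
    by (intro sum_mono) (auto intro: mult_left_mono)
  also have "\<dots> = \<rho> ^ n * (\<Sum>v\<in>V. if 0 < D \<or> v = None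
            then p v * ladder_lyapunov \<eta> \<sigma> (max (D - one_indicator v + \<sigma>) 0) else 0)"
    by (simp add: sum_distrib_left if_distrib mult.left_commute cong: if_cong)
  also have "\<dots> \<le> \<rho> ^ n * (\<rho> * ladder_lyapunov \<eta> \<sigma> D)"
    using \<open>0 \<le> \<rho>\<close> by (intro mult_left_mono ladder_lyapunov_drift assms) auto
  finally show ?case by (simp only: power_Suc ac_simps)
qed

section \<open>Observed ladder times are good times\<close>

definition ones_frequency :: "(nat \<Rightarrow> int) \<Rightarrow> nat \<Rightarrow> real" where
  "ones_frequency z k = (\<Sum>i<k. if z i = 1 then 1 else 0) / real k"

lemma ctx_len_c_tau: "ctx_len (c_tau \<sigma> z) = T_sigma \<sigma> z"
  by (cases "T_sigma \<sigma> z") (auto simp: ctx_len_def c_tau_def suffix_string_def)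

lemma T_sigma_le_enat_iff:
  "T_sigma \<sigma> z \<le> enat K \<longleftrightarrow> (\<exists>k. 1 \<le> k \<and> k \<le> K \<and> \<sigma> \<le> ones_frequency z k)"
proof -
  define S where "S = {enat k | k. 1 \<le> k \<and> \<sigma> \<le> ones_frequency z k}"
  have T: "T_sigma \<sigma> z = Inf S"
    unfolding T_sigma_def S_def ones_frequency_def ..
  show ?thesis
  proof
    assume "T_sigma \<sigma> z \<le> enat K"
    then have "S \<noteq> {}" by (auto simp: T Inf_enat_def)
    then have "Inf S \<in> S" by (auto simp: Inf_enat_def intro: LeastI)
    with \<open>T_sigma \<sigma> z \<le> enat K\<close> show "\<exists>k. 1 \<le> k \<and> k \<le> K \<and> \<sigma> \<le> ones_frequency z k"
      by (auto simp: T S_def)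
  next
    assume "\<exists>k. 1 \<le> k \<and> k \<le> K \<and> \<sigma> \<le> ones_frequency z k"
    then obtain k where "k \<le> K" "enat k \<in> S" by (auto simp: S_def)
    then show "T_sigma \<sigma> z \<le> enat K"
      unfolding T by (meson Inf_lower enat_ord_simps(1) order_trans)
  qed
qed

lemma c_n_le_enat_iff:
  "c_n \<sigma> y j \<le> enat K \<longleftrightarrow>
     (\<forall>a\<in>biseqs. \<exists>k. 1 \<le> k \<and> k \<le> K \<and> \<sigma> \<le> ones_frequency (\<lambda>k. Yfill y a (j - int k)) k)"
  unfolding c_n_def SUP_le_iff ctx_len_c_tau T_sigma_le_enat_iff ..

definition ladder_walk :: "real \<Rightarrow> (int \<Rightarrow> int option) \<Rightarrow> nat \<Rightarrow> real" where
  "ladder_walk \<sigma> y k = (\<Sum>t<k. one_indicator (y (- int t)) - \<sigma>)"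

fun ladder_walk_max :: "real \<Rightarrow> (int \<Rightarrow> int option) \<Rightarrow> nat \<Rightarrow> real" where
  "ladder_walk_max \<sigma> y 0 = 0"
| "ladder_walk_max \<sigma> y (Suc k) = max (ladder_walk_max \<sigma> y k) (ladder_walk \<sigma> y (Suc k))"

lemma ladder_walk_le_max: "l \<le> k \<Longrightarrow> ladder_walk \<sigma> y l \<le> ladder_walk_max \<sigma> y k"
proof (induction k)
  case 0
  then show ?case by (simp add: ladder_walk_def)
next
  case (Suc k)
  then show ?case by (cases "l = Suc k") auto
qed

lemma ladder_walk_add:
  "ladder_walk \<sigma> y (l + K) = ladder_walk \<sigma> y l + (\<Sum>i<K. one_indicator (y (- int (l + i)))) - \<sigma> * K"
  by (induction K) (simp_all add: ladder_walk_def algebra_simps)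

text \<open>Filling the unobserved positions arbitrarily can only add ones, so a window on which the walk
  does not decrease has frequency of ones at least \<open>\<sigma>\<close> for every filling.\<close>

lemma c_n_le_if_ladder_walk_le:
  assumes "l < j" "ladder_walk \<sigma> y l \<le> ladder_walk \<sigma> y j"
  shows "c_n \<sigma> y (- int l) \<le> enat (j - l)"
  unfolding c_n_le_enat_iff
proof
  fix a
  define K where "K = j - l"
  let ?z = "\<lambda>k. Yfill y a (- int l - int k)"
  have "\<sigma> * K \<le> (\<Sum>i<K. one_indicator (y (- int (l + i))))"
    using assms ladder_walk_add[of \<sigma> y l K] by (simp add: K_def)
  also have "\<dots> \<le> (\<Sum>i<K. if ?z i = 1 then 1 else 0)"
    by (intro sum_mono) (auto simp: one_indicator_def Yfill_def split: option.split)
  finally have "\<sigma> \<le> ones_frequency ?z K"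
    using assms(1) by (simp add: ones_frequency_def K_def field_simps)
  then show "\<exists>k. 1 \<le> k \<and> k \<le> j - l \<and> \<sigma> \<le> ones_frequency ?z k"
    using assms(1) by (intro exI[of _ K]) (auto simp: K_def)
qed

definition good_times :: "real \<Rightarrow> (int \<Rightarrow> int option) \<Rightarrow> int set" where
  "good_times \<sigma> y = {i. i \<le> 0 \<and> (\<forall>j\<in>{i..0}. y j \<noteq> None \<or> c_n \<sigma> y j \<le> enat (nat (j - i)))}"

lemma theta_bar_eq_Sup_good_times:
  "theta_bar \<sigma> y 0 = Sup ((\<lambda>i. ereal (real_of_int i)) ` good_times \<sigma> y)"
  unfolding theta_bar_def good_times_def ..

lemma theta_bar_nonpos: "theta_bar \<sigma> y 0 \<le> 0"
  unfolding theta_bar_eq_Sup_good_times by (rule Sup_least) (auto simp: good_times_def)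

lemma ladder_time_in_good_times:
  assumes "y (- int j) \<noteq> None" "ladder_walk \<sigma> y j = ladder_walk_max \<sigma> y j"
  shows "- int j \<in> good_times \<sigma> y"
  unfolding good_times_def
proof (intro CollectI conjI ballI)
  fix t assume t: "t \<in> {- int j..0}"
  define l where "l = nat (- t)"
  have l: "t = - int l" "l \<le> j" using t by (auto simp: l_def)
  show "y t \<noteq> None \<or> c_n \<sigma> y t \<le> enat (nat (t - - int j))"
  proof (cases "l = j")
    case False
    have "ladder_walk \<sigma> y l \<le> ladder_walk \<sigma> y j"
      using ladder_walk_le_max[OF l(2), of \<sigma> y] assms(2) by simp
    with False l(2) have "c_n \<sigma> y (- int l) \<le> enat (j - l)"
      by (intro c_n_le_if_ladder_walk_le) auto
    moreover have "nat (t - - int j) = j - l" using l by simp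
    ultimately show ?thesis using l(1) by simp
  qed (use l assms(1) in simp)
qed simp

lemma exists_ladder_time_if_not_avoids:
  assumes "\<not> avoids_ladder \<sigma> (ladder_walk_max \<sigma> y k - ladder_walk \<sigma> y k) (map (\<lambda>t. y (- int t)) [k..<k + n])"
  shows "\<exists>j. k \<le> j \<and> j < k + n \<and> y (- int j) \<noteq> None \<and> ladder_walk \<sigma> y j = ladder_walk_max \<sigma> y j"
  using assms
proof (induction n arbitrary: k)
  case (Suc n)
  let ?D = "ladder_walk_max \<sigma> y k - ladder_walk \<sigma> y k"
  have "0 \<le> ?D" using ladder_walk_le_max[of k k] by simp
  have next_deficit: "max (?D - one_indicator (y (- int k)) + \<sigma>) 0
      = ladder_walk_max \<sigma> y (Suc k) - ladder_walk \<sigma> y (Suc k)"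
    by (simp add: ladder_walk_def)
  have upt: "[k..<k + Suc n] = k # [Suc k..<Suc k + n]" by (simp add: upt_rec del: upt_Suc)
  show ?case
  proof (cases "0 < ?D \<or> y (- int k) = None")
    case True
    then have "\<not> avoids_ladder \<sigma> (ladder_walk_max \<sigma> y (Suc k) - ladder_walk \<sigma> y (Suc k))
        (map (\<lambda>t. y (- int t)) [Suc k..<Suc k + n])"
      using Suc.prems unfolding upt next_deficit[symmetric] by (simp del: upt_Suc)
    then obtain j where "Suc k \<le> j" "j < Suc k + n" "y (- int j) \<noteq> None"
        "ladder_walk \<sigma> y j = ladder_walk_max \<sigma> y j"
      using Suc.IH by blast
    then show ?thesis by (intro exI[of _ j]) auto
  next
    case False
    then show ?thesis using \<open>0 \<le> ?D\<close> by auto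
  qed
qed simp

lemma avoids_ladder_if_theta_bar_le:
  assumes "ereal (real n) \<le> \<bar>theta_bar \<sigma> y 0\<bar>"
  shows "avoids_ladder \<sigma> 0 (map (\<lambda>t. y (- int t)) [0..<n])"
proof (rule ccontr)
  assume "\<not> ?thesis"
  then obtain j where j: "j < n" "y (- int j) \<noteq> None" "ladder_walk \<sigma> y j = ladder_walk_max \<sigma> y j"
    using exists_ladder_time_if_not_avoids[of \<sigma> y 0 n] by (auto simp: ladder_walk_def)
  have "ereal (- real j) \<le> theta_bar \<sigma> y 0"
    unfolding theta_bar_eq_Sup_good_times using ladder_time_in_good_times[OF j(2,3)]
    by (intro Sup_upper) force
  with theta_bar_nonpos[of \<sigma> y] have "\<bar>theta_bar \<sigma> y 0\<bar> \<le> ereal (real j)"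
    by (cases "theta_bar \<sigma> y 0") auto
  with assms j(1) show False by (meson ereal_less_eq(3) not_le of_nat_less_iff order_trans)
qed

section \<open>Measurability of the coalescence time\<close>

lemma ones_frequency_cong: "(\<And>i. i < k \<Longrightarrow> z i = z' i) \<Longrightarrow> ones_frequency z k = ones_frequency z' k"
  unfolding ones_frequency_def by (intro arg_cong2[where f = "(/)"] sum.cong) auto

lemma c_n_le_enat_cong:
  assumes "\<And>m. m < K \<Longrightarrow> y (j - int m) = y' (j - int m)"
  shows "c_n \<sigma> y j \<le> enat K \<longleftrightarrow> c_n \<sigma> y' j \<le> enat K"
proof -
  have "ones_frequency (\<lambda>k. Yfill y a (j - int k)) k = ones_frequency (\<lambda>k. Yfill y' a (j - int k)) k"
    if "k \<le> K" for a k
    using assms that by (intro ones_frequency_cong) (auto simp: Yfill_def)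
  then show ?thesis unfolding c_n_le_enat_iff by (metis (no_types, lifting))
qed

lemma good_times_cong:
  assumes "\<And>t. i \<le> t \<Longrightarrow> t \<le> 0 \<Longrightarrow> y t = y' t"
  shows "i \<in> good_times \<sigma> y \<longleftrightarrow> i \<in> good_times \<sigma> y'"
proof -
  have "c_n \<sigma> y j \<le> enat (nat (j - i)) \<longleftrightarrow> c_n \<sigma> y' j \<le> enat (nat (j - i))" if "j \<in> {i..0}" for j
    using that by (intro c_n_le_enat_cong assms) auto
  then show ?thesis using assms unfolding good_times_def by auto
qed

definition window_extension :: "int \<Rightarrow> int option list \<Rightarrow> int \<Rightarrow> int option" where
  "window_extension i vs t = (if i \<le> t \<and> t \<le> 0 then vs ! nat (t - i) else None)"

lemma mem_good_times_iff_window: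
  "i \<in> good_times \<sigma> y \<longleftrightarrow> i \<in> good_times \<sigma> (window_extension i (map y [i..0]))"
  by (intro good_times_cong) (auto simp: window_extension_def nth_upto)

lemma measurable_map_list_count_space:
  fixes X :: "'i \<Rightarrow> 'a \<Rightarrow> 'b::countable"
  assumes "\<And>t. X t \<in> measurable M (count_space UNIV)"
  shows "(\<lambda>\<omega>. map (\<lambda>t. X t \<omega>) js) \<in> measurable M (count_space UNIV)"
proof -
  have "{\<omega>\<in>space M. map (\<lambda>t. X t \<omega>) js = vs} \<in> sets M" for vs
  proof (induction js arbitrary: vs)
    case (Cons t js)
    have "{\<omega>\<in>space M. map (\<lambda>t. X t \<omega>) (t # js) = vs} =
        (case vs of [] \<Rightarrow> {} | v # vs' \<Rightarrow>
          {\<omega>\<in>space M. X t \<omega> = v} \<inter> {\<omega>\<in>space M. map (\<lambda>t. X t \<omega>) js = vs'})"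
      by (auto split: list.split)
    then show ?case
      using Cons.IH measurable_sets[OF assms, of "{v}" t for v] by (auto split: list.split simp: vimage_def Int_def conj_commute)
  qed (cases vs, auto)
  then show ?thesis
    unfolding measurable_count_space_eq2_countable by (auto simp: vimage_def Int_def conj_commute)
qed

lemma measurable_map_list_pred:
  fixes X :: "'i \<Rightarrow> 'a \<Rightarrow> 'b::countable"
  assumes "\<And>t. X t \<in> measurable M (count_space UNIV)"
  shows "{\<omega>\<in>space M. Q (map (\<lambda>t. X t \<omega>) js)} \<in> sets M"
proof -
  have "(\<lambda>\<omega>. map (\<lambda>t. X t \<omega>) js) -` {vs. Q vs} \<inter> space M \<in> sets M"
    by (rule measurable_sets[OF measurable_map_list_count_space[OF assms]]) simp
  moreover have "(\<lambda>\<omega>. map (\<lambda>t. X t \<omega>) js) -` {vs. Q vs} \<inter> space M = {\<omega>\<in>space M. Q (map (\<lambda>t. X t \<omega>) js)}"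
    by auto
  ultimately show ?thesis by simp
qed

lemma Sup_image_eq_SUP_if:
  fixes f :: "'a \<Rightarrow> 'b::complete_lattice"
  assumes "S \<subseteq> T"
  shows "Sup (f ` S) = (SUP i\<in>T. if i \<in> S then f i else bot)"
proof (rule antisym)
  show "Sup (f ` S) \<le> (SUP i\<in>T. if i \<in> S then f i else bot)"
  proof (rule SUP_least)
    fix i assume "i \<in> S"
    with assms show "f i \<le> (SUP i\<in>T. if i \<in> S then f i else bot)"
      by (intro SUP_upper2[of i]) auto
  qed
qed (rule SUP_least, auto intro: SUP_upper)

lemma theta_bar_measurable:
  fixes Y :: "int \<Rightarrow> 'a \<Rightarrow> int option"
  assumes "\<And>t. Y t \<in> measurable M (count_space UNIV)"
  shows "(\<lambda>\<omega>. theta_bar \<sigma> (\<lambda>t. Y t \<omega>) 0) \<in> borel_measurable M"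
proof -
  define A where "A i = {\<omega>. i \<in> good_times \<sigma> (\<lambda>t. Y t \<omega>)}" for i
  have A: "A i \<inter> space M \<in> sets M" for i
  proof -
    have "A i \<inter> space M = {\<omega>\<in>space M. i \<in> good_times \<sigma> (window_extension i (map (\<lambda>t. Y t \<omega>) [i..0]))}"
      using mem_good_times_iff_window[of i \<sigma>] by (auto simp: A_def)
    then show ?thesis using measurable_map_list_pred[OF assms] by simp
  qed
  have "theta_bar \<sigma> (\<lambda>t. Y t \<omega>) 0 = (SUP i\<in>{..0}. if \<omega> \<in> A i then ereal (real_of_int i) else bot)" for \<omega>
    unfolding theta_bar_eq_Sup_good_times A_def mem_Collect_eq
    by (rule Sup_image_eq_SUP_if) (auto simp: good_times_def)
  then show ?thesis
    using A by (simp only:) (intro borel_measurable_SUP measurable_If_set; simp)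
qed

section \<open>Patterns of independent identically distributed symbols\<close>

lemma (in prob_space) prob_map_eq_prod_list:
  assumes indep: "indep_vars (\<lambda>_. count_space UNIV) X UNIV"
    and dist: "\<And>t v. v \<in> V \<Longrightarrow> prob {\<omega>\<in>space M. X t \<omega> = v} = p v"
    and js: "distinct js" "length vs = length js" and vs: "set vs \<subseteq> V"
  shows "prob {\<omega>\<in>space M. map (\<lambda>t. X t \<omega>) js = vs} = prod_list (map p vs)"
proof (cases "js = []")
  case False
  define f where "f t = the (map_of (zip js vs) t)" for t
  have "f (js ! i) = vs ! i" if "i < length js" for i
    using map_of_zip_nth[OF js(2)[symmetric] js(1)] that js(2) by (simp add: f_def)
  then have f: "map f js = vs"
    using js(2) by (intro nth_equalityI) simp_all
  have "{\<omega>\<in>space M. map (\<lambda>t. X t \<omega>) js = vs} = (\<Inter>t\<in>set js. X t -` {f t} \<inter> space M)"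
    using False by (auto simp: f[symmetric] neq_Nil_conv)
  then have "prob {\<omega>\<in>space M. map (\<lambda>t. X t \<omega>) js = vs} = (\<Prod>t\<in>set js. prob (X t -` {f t} \<inter> space M))"
    using False by (simp only:) (intro indep_varsD[OF indep], auto)
  also have "\<dots> = (\<Prod>t\<in>set js. p (f t))"
  proof (rule prod.cong)
    fix t assume "t \<in> set js"
    then have "f t \<in> V" using vs f by auto
    then show "prob (X t -` {f t} \<inter> space M) = p (f t)"
      using dist[of "f t" t] by (simp add: vimage_def Int_def conj_commute)
  qed simp
  also have "\<dots> = prod_list (map p vs)"
    using js(1) by (simp add: prod.distinct_set_conv_list f[symmetric] comp_def)
  finally show ?thesis .
qed (use js prob_space in simp)

lemma (in prob_space) prob_map_satisfies:
  fixes X :: "'i \<Rightarrow> 'a \<Rightarrow> 'b::countable"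
  assumes indep: "indep_vars (\<lambda>_. count_space UNIV) X UNIV"
    and dist: "\<And>t v. v \<in> V \<Longrightarrow> prob {\<omega>\<in>space M. X t \<omega> = v} = p v"
    and "finite V" "\<And>t \<omega>. \<omega> \<in> space M \<Longrightarrow> X t \<omega> \<in> V" "distinct js"
  shows "prob {\<omega>\<in>space M. Q (map (\<lambda>t. X t \<omega>) js)}
    = (\<Sum>vs\<in>lists_of_length V (length js). if Q vs then prod_list (map p vs) else 0)"
proof -
  let ?L = "{vs\<in>lists_of_length V (length js). Q vs}"
  let ?B = "\<lambda>vs. {\<omega>\<in>space M. map (\<lambda>t. X t \<omega>) js = vs}"
  have "random_variable (count_space UNIV) (X t)" for t
    using indep by (simp add: indep_vars_def)
  then have B: "?B vs \<in> events" for vs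
    by (rule measurable_map_list_pred)
  have "{\<omega>\<in>space M. Q (map (\<lambda>t. X t \<omega>) js)} = (\<Union>vs\<in>?L. ?B vs)"
    using assms(4) by (auto simp: lists_of_length_def)
  also have "prob (\<Union>vs\<in>?L. ?B vs) = (\<Sum>vs\<in>?L. prob (?B vs))"
    using finite_lists_of_length[OF assms(3)] B
    by (intro finite_measure_finite_Union) (auto simp: disjoint_family_on_def)
  finally have "prob {\<omega>\<in>space M. Q (map (\<lambda>t. X t \<omega>) js)} = (\<Sum>vs\<in>?L. prob (?B vs))" .
  also have "\<dots> = (\<Sum>vs\<in>?L. prod_list (map p vs))"
    using assms(5) by (intro sum.cong) (auto simp: lists_of_length_def prob_map_eq_prod_list[OF indep dist])
  also have "\<dots> = (\<Sum>vs\<in>lists_of_length V (length js). if Q vs then prod_list (map p vs) else 0)"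
    using finite_lists_of_length[OF assms(3)] by (rule sum.inter_filter)
  finally show ?thesis .
qed

lemma (in prob_space) prob_theta_bar_tail_le:
  fixes Y :: "int \<Rightarrow> 'a \<Rightarrow> int option"
  assumes indep: "indep_vars (\<lambda>_. count_space UNIV) Y UNIV"
    and dist: "\<And>t v. v \<in> V \<Longrightarrow> prob {\<omega>\<in>space M. Y t \<omega> = v} = p v"
    and V: "finite V" "\<And>t \<omega>. \<omega> \<in> space M \<Longrightarrow> Y t \<omega> \<in> V" "Some 1 \<in> V" "None \<in> V"
    and "0 \<le> \<eta>" "\<sigma> \<le> 1"
    and "p (Some 1) * exp (- \<eta> * (1 - \<sigma>)) + (1 - p (Some 1)) * exp (\<eta> * \<sigma>) \<le> \<rho>"
    and "p None * exp \<eta> \<le> \<rho>"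
  shows "prob {\<omega>\<in>space M. ereal (real n) \<le> \<bar>theta_bar \<sigma> (\<lambda>t. Y t \<omega>) 0\<bar>} \<le> \<rho> ^ n"
proof -
  let ?js = "map (\<lambda>k. - int k) [0..<n]"
  have "distinct ?js" by (simp add: distinct_map inj_on_def)
  have prob_avoids: "prob {\<omega>\<in>space M. avoids_ladder \<sigma> D (map (\<lambda>t. Y t \<omega>) ?js)} = avoid_weight V p \<sigma> n D" for D
    using prob_map_satisfies[OF indep dist V(1,2) \<open>distinct ?js\<close>] by (simp add: avoid_weight_def)
  have p_nonneg: "0 \<le> p v" if "v \<in> V" for v
    using dist[OF that, of 0] measure_nonneg by metis
  have "(\<Sum>v\<in>V. p v) = (\<Sum>vs\<in>lists_of_length V (length [0::int]). prod_list (map p vs))"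
    using V(1) by (simp add: sum_lists_of_length_Suc)
  also have "\<dots> = prob (space M)"
    using prob_map_satisfies[OF indep dist V(1,2), of "[0]" "\<lambda>_. True"] by simp
  also have "\<dots> = 1"
    by (rule prob_space)
  finally have p_sum: "(\<Sum>v\<in>V. p v) = 1" .
  have "prob {\<omega>\<in>space M. ereal (real n) \<le> \<bar>theta_bar \<sigma> (\<lambda>t. Y t \<omega>) 0\<bar>}
      \<le> prob {\<omega>\<in>space M. avoids_ladder \<sigma> 0 (map (\<lambda>t. Y t \<omega>) ?js)}"
  proof (rule finite_measure_mono)
    have "random_variable (count_space UNIV) (Y t)" for t
      using indep by (simp add: indep_vars_def)
    then show "{\<omega>\<in>space M. avoids_ladder \<sigma> 0 (map (\<lambda>t. Y t \<omega>) ?js)} \<in> events"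
      by (rule measurable_map_list_pred)
  qed (auto dest: avoids_ladder_if_theta_bar_le simp: comp_def)
  also have "\<dots> = avoid_weight V p \<sigma> n 0" by (rule prob_avoids)
  also have "\<dots> \<le> \<rho> ^ n * ladder_lyapunov \<eta> \<sigma> 0"
    by (rule avoid_weight_le_lyapunov[OF V(1) p_nonneg p_sum V(3,4) assms(7-)])
  finally show ?thesis by (simp add: ladder_lyapunov_def)
qed

section \<open>The contraction rate\<close>

lemma exp_le_one_plus_self_plus_square:
  fixes x :: real
  assumes "\<bar>x\<bar> \<le> 1"
  shows "exp x \<le> 1 + x + x\<^sup>2"
proof (cases "0 \<le> x")
  case True
  then show ?thesis using exp_bound assms by simp
next
  case False
  have "1 - x \<le> exp (- x)"
    using exp_ge_add_one_self[of "- x"] by simp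
  then have "exp x \<le> 1 / (1 - x)"
    using False by (simp add: exp_minus field_simps)
  also have "\<dots> \<le> 1 + x + x\<^sup>2"
  proof -
    have "x * x\<^sup>2 \<le> 0"
      using False by (simp add: mult_nonpos_nonneg)
    then have "1 \<le> (1 + x + x\<^sup>2) * (1 - x)"
      by (simp add: algebra_simps power2_eq_square)
    then show ?thesis
      using False by (simp add: divide_le_eq)
  qed
  finally show ?thesis .
qed

lemma drift_rate_lt_one:
  fixes \<sigma> q \<eta> :: real
  assumes "0 \<le> \<sigma>" "\<sigma> \<le> 1" "q \<le> 1" "0 < \<eta>" "\<eta> \<le> (q - \<sigma>) / 2"
  shows "q * exp (- \<eta> * (1 - \<sigma>)) + (1 - q) * exp (\<eta> * \<sigma>) < 1"
proof -
  have "0 \<le> q" "\<eta> \<le> 1" using assms by auto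
  have "\<bar>- \<eta> * (1 - \<sigma>)\<bar> \<le> 1" "\<bar>\<eta> * \<sigma>\<bar> \<le> 1"
    using assms \<open>\<eta> \<le> 1\<close> by (auto simp: abs_mult mult_le_one)
  then have "q * exp (- \<eta> * (1 - \<sigma>)) + (1 - q) * exp (\<eta> * \<sigma>)
      \<le> q * (1 + (- \<eta> * (1 - \<sigma>)) + (- \<eta> * (1 - \<sigma>))\<^sup>2) + (1 - q) * (1 + \<eta> * \<sigma> + (\<eta> * \<sigma>)\<^sup>2)"
    using \<open>0 \<le> q\<close> assms(3)
    by (intro add_mono mult_left_mono exp_le_one_plus_self_plus_square) auto
  also have "\<dots> = 1 - \<eta> * (q - \<sigma>) + \<eta>\<^sup>2 * (q * (1 - \<sigma>)\<^sup>2 + (1 - q) * \<sigma>\<^sup>2)"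
    by (simp add: algebra_simps power2_eq_square)
  also have "\<dots> \<le> 1 - \<eta> * (q - \<sigma>) + \<eta>\<^sup>2"
  proof -
    have "(1 - \<sigma>)\<^sup>2 \<le> 1" "\<sigma>\<^sup>2 \<le> 1"
      using assms(1,2) by (auto simp: power_le_one)
    then have "q * (1 - \<sigma>)\<^sup>2 + (1 - q) * \<sigma>\<^sup>2 \<le> q * 1 + (1 - q) * 1"
      using \<open>0 \<le> q\<close> assms(3) by (intro add_mono mult_left_mono) auto
    then show ?thesis by (simp add: mult_left_le)
  qed
  also have "\<dots> < 1"
  proof -
    have "\<eta> * \<eta> \<le> \<eta> * ((q - \<sigma>) / 2)"
      using assms(4,5) by (intro mult_left_mono) auto
    moreover have "0 < \<eta> * (q - \<sigma>)"
      using assms(4,5) by simp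
    ultimately show ?thesis by (simp add: power2_eq_square)
  qed
  finally show ?thesis .
qed

lemma stay_rate_lt_one:
  fixes \<beta> \<eta> :: real
  assumes "0 < \<beta>" "\<beta> \<le> 1" "0 \<le> \<eta>" "\<eta> \<le> \<beta> / 4"
  shows "(1 - \<beta>) * exp \<eta> < 1"
proof -
  have "exp \<eta> \<le> 1 + \<eta> + \<eta>\<^sup>2"
    using assms by (intro exp_le_one_plus_self_plus_square) auto
  also have "\<dots> \<le> 1 + 2 * \<eta>"
    using assms by (simp add: power2_eq_square mult_left_le)
  finally have "(1 - \<beta>) * exp \<eta> \<le> (1 - \<beta>) * (1 + 2 * \<eta>)"
    using assms(2) by (intro mult_left_mono) auto
  also have "\<dots> \<le> 1 - \<beta> + 2 * \<eta>"
    using assms by (simp add: algebra_simps mult_left_le)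
  also have "\<dots> < 1"
    using assms by simp
  finally show ?thesis .
qed

lemma exists_contraction_rate:
  fixes \<sigma> q \<beta> :: real
  assumes "0 \<le> \<sigma>" "\<sigma> < q" "q \<le> \<beta>" "\<beta> \<le> 1"
  obtains \<eta> \<rho> where "0 \<le> \<eta>" "0 < \<rho>" "\<rho> < 1"
    "q * exp (- \<eta> * (1 - \<sigma>)) + (1 - q) * exp (\<eta> * \<sigma>) \<le> \<rho>" "(1 - \<beta>) * exp \<eta> \<le> \<rho>"
proof
  define \<eta> where "\<eta> = min ((q - \<sigma>) / 2) (\<beta> / 4)"
  let ?\<rho> = "max (q * exp (- \<eta> * (1 - \<sigma>)) + (1 - q) * exp (\<eta> * \<sigma>)) ((1 - \<beta>) * exp \<eta>)"
  have "0 < \<eta>" using assms by (simp add: \<eta>_def)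
  then show "0 \<le> \<eta>" by simp
  show "q * exp (- \<eta> * (1 - \<sigma>)) + (1 - q) * exp (\<eta> * \<sigma>) \<le> ?\<rho>" "(1 - \<beta>) * exp \<eta> \<le> ?\<rho>"
    by simp_all
  have "0 < q * exp (- \<eta> * (1 - \<sigma>)) + (1 - q) * exp (\<eta> * \<sigma>)"
    using assms by (intro add_pos_nonneg) auto
  then show "0 < ?\<rho>" by simp
  have "\<eta> \<le> (q - \<sigma>) / 2" "\<eta> \<le> \<beta> / 4"
    unfolding \<eta>_def by (rule min.cobounded1, rule min.cobounded2)
  then show "?\<rho> < 1"
    using assms \<open>0 < \<eta>\<close> drift_rate_lt_one[of \<sigma> q \<eta>] stay_rate_lt_one[of \<beta> \<eta>] by simp
qed

section \<open>Integrability of a variable with a geometric tail\<close>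

lemma e2ennreal_abs_le_suminf:
  fixes x :: ereal
  shows "e2ennreal \<bar>x\<bar> \<le> (\<Sum>n. of_bool (ereal (real n) \<le> \<bar>x\<bar>))"
    (is "_ \<le> (\<Sum>n. ?f n)")
proof -
  have lower: "of_nat N \<le> (\<Sum>n. ?f n)" if "\<And>n. n < N \<Longrightarrow> ereal (real n) \<le> \<bar>x\<bar>" for N
  proof -
    have "of_nat N = (\<Sum>n<N. ?f n)" using that by simp
    also have "\<dots> \<le> (\<Sum>n. ?f n)"
      unfolding suminf_eq_SUP by (rule SUP_upper) simp
    finally show ?thesis .
  qed
  show ?thesis
  proof (cases "\<bar>x\<bar>")
    case (real r)
    then have "0 \<le> r" using abs_ereal_pos[of x] unfolding real by simp
    define N where "N = nat \<lfloor>r\<rfloor> + 1"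
    have "ereal (real n) \<le> \<bar>x\<bar>" if "n < N" for n
    proof -
      have "int n \<le> \<lfloor>r\<rfloor>" using that \<open>0 \<le> r\<close> unfolding N_def by linarith
      then show ?thesis unfolding real by (simp add: le_floor_iff)
    qed
    then have "of_nat N \<le> (\<Sum>n. ?f n)" by (rule lower)
    moreover have "e2ennreal \<bar>x\<bar> \<le> of_nat N"
    proof -
      have "r \<le> real N" using \<open>0 \<le> r\<close> by (simp add: N_def) linarith
      then show ?thesis unfolding real by (simp add: ennreal_of_nat_eq_real_of_nat ennreal_leI)
    qed
    ultimately show ?thesis by (rule order_trans[rotated])
  next
    case PInf
    then have "(SUP N. of_nat N :: ennreal) \<le> (\<Sum>n. ?f n)"
      using lower by (intro SUP_least) auto
    then show ?thesis using PInf by (simp add: ennreal_SUP_of_nat_eq_top)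
  qed (use abs_ereal_pos[of x] in simp)
qed

lemma (in prob_space) nn_integral_abs_finite_if_geometric_tail:
  fixes X :: "'a \<Rightarrow> ereal"
  assumes "X \<in> borel_measurable M" "0 \<le> C" "0 \<le> \<rho>" "\<rho> < 1"
    and tail: "\<And>n. prob {\<omega>\<in>space M. ereal (real n) \<le> \<bar>X \<omega>\<bar>} \<le> C * \<rho> ^ n"
  shows "(\<integral>\<^sup>+ \<omega>. e2ennreal \<bar>X \<omega>\<bar> \<partial>M) < \<infinity>"
proof -
  let ?A = "\<lambda>n. {\<omega>\<in>space M. ereal (real n) \<le> \<bar>X \<omega>\<bar>}"
  have A: "?A n \<in> events" for n
    using assms(1) by measurable
  have "(\<integral>\<^sup>+ \<omega>. e2ennreal \<bar>X \<omega>\<bar> \<partial>M) \<le> (\<integral>\<^sup>+ \<omega>. (\<Sum>n. indicator (?A n) \<omega>) \<partial>M)"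
    by (intro nn_integral_mono) (simp add: indicator_def e2ennreal_abs_le_suminf)
  also have "\<dots> = (\<Sum>n. emeasure M (?A n))"
    using A by (simp add: nn_integral_suminf)
  also have "\<dots> \<le> (\<Sum>n. ennreal (C * \<rho> ^ n))"
    using tail by (intro suminf_le) (auto simp: emeasure_eq_measure intro: ennreal_leI)
  also have "\<dots> = ennreal (\<Sum>n. C * \<rho> ^ n)"
    using assms(2-4) by (intro suminf_ennreal2 summable_mult summable_geometric) auto
  finally show ?thesis by (simp add: order_le_less_trans)
qed

section \<open>The symbols generated from uniform variables\<close>

lemma (in prob_space) prob_less_uniform:
  assumes "X \<in> borel_measurable M" "distr M lborel X = uniform_measure lborel {0..<1}"
    and "0 \<le> x" "x \<le> 1"
  shows "prob {\<omega>\<in>space M. X \<omega> < x} = x"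
proof -
  have "prob {\<omega>\<in>space M. X \<omega> < x} = measure (distr M lborel X) {..<x}"
    using assms(1) by (subst measure_distr) (auto simp: vimage_def Int_def conj_commute)
  also have "\<dots> = measure lborel ({0..<1} \<inter> {..<x}) / measure lborel {0..<1::real}"
    unfolding assms(2) by (subst measure_uniform_measure) auto
  also have "{0..<1} \<inter> {..<x} = {0..<x}"
    using assms(4) by auto
  finally show ?thesis using assms(3) by simp
qed

definition symbol_prob :: "(int \<Rightarrow> (nat \<Rightarrow> int) \<Rightarrow> real) \<Rightarrow> int option \<Rightarrow> real" where
  "symbol_prob P v = (case v of Some a \<Rightarrow> alpha P a | None \<Rightarrow> 1 - alpha_m1 P)"

lemma measurable_Yvar: "Yvar P a1 a2 \<in> borel \<rightarrow>\<^sub>M count_space UNIV"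
  unfolding Yvar_def by measurable

lemma (in prob_space) prob_Yvar_eq:
  assumes X: "X \<in> borel_measurable M" "distr M lborel X = uniform_measure lborel {0..<1}"
    and P: "is_kernel P" "symA = {a1, a2}" "a1 \<noteq> a2"
    and v: "v \<in> insert None (Some ` symA)"
  shows "prob {\<omega>\<in>space M. Yvar P a1 a2 (X \<omega>) = v} = symbol_prob P v"
proof -
  let ?below = "\<lambda>x. {\<omega>\<in>space M. X \<omega> < x}"
  have "0 \<le> alpha P a1" "0 \<le> alpha P a2"
    using alpha_nonneg[OF P(1)] P(2) by auto
  moreover have "alpha_m1 P \<le> 1" by (rule alpha_m1_le_one[OF P(1)])
  moreover note sum = alpha_m1_eq[OF P(2,3)]
  ultimately have prob_below: "prob (?below (alpha P a1)) = alpha P a1" "prob (?below (alpha_m1 P)) = alpha_m1 P"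
    using prob_less_uniform[OF X] by simp_all
  have below: "?below x \<in> events" for x
    using X(1) by measurable
  from v P(2) consider "v = Some a1" | "v = Some a2" | "v = None" by auto
  then show ?thesis
  proof cases
    case 1
    then have "{\<omega>\<in>space M. Yvar P a1 a2 (X \<omega>) = v} = ?below (alpha P a1)"
      using P(3) by (auto simp: Yvar_def)
    then show ?thesis using 1 prob_below by (simp add: symbol_prob_def)
  next
    case 2
    then have "{\<omega>\<in>space M. Yvar P a1 a2 (X \<omega>) = v} = ?below (alpha_m1 P) - ?below (alpha P a1)"
      using P(3) by (auto simp: Yvar_def)
    moreover have "?below (alpha P a1) \<subseteq> ?below (alpha_m1 P)"
      using sum \<open>0 \<le> alpha P a2\<close> by auto
    ultimately show ?thesis
      using 2 prob_below below sum by (simp add: finite_measure_Diff symbol_prob_def)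
  next
    case 3
    then have "{\<omega>\<in>space M. Yvar P a1 a2 (X \<omega>) = v} = space M - ?below (alpha_m1 P)"
      using sum \<open>0 \<le> alpha P a2\<close> by (auto simp: Yvar_def)
    then show ?thesis
      using 3 prob_below below by (simp add: prob_compl symbol_prob_def)
  qed
qed

theorem mainTheorem7:
  fixes M :: "'w measure" and U :: "int \<Rightarrow> 'w \<Rightarrow> real"
    and P :: "int \<Rightarrow> (nat \<Rightarrow> int) \<Rightarrow> real" and \<sigma> :: real and a1 a2 :: int
  assumes "prob_space M"
    and "prob_space.indep_vars M (\<lambda>_. borel) U UNIV"
    and "\<forall>i. distr M lborel (U i) = uniform_measure lborel {0..<1}"
    and "symA = {a1, a2}" and "a1 \<noteq> a2"
    and "0 < \<sigma>" and "\<sigma> < 1"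
    and "is_kernel P"
    and "\<sigma> < (INF v\<in>tau \<sigma>. skel_p P 1 v)"
  shows "let \<theta> = (\<lambda>\<omega>. theta_bar \<sigma> (\<lambda>i. Yvar P a1 a2 (U i \<omega>)) 0) in
           \<theta> \<in> borel_measurable M
         \<and> (\<integral>\<^sup>+ \<omega>. e2ennreal \<bar>\<theta> \<omega>\<bar> \<partial>M) < \<infinity>
         \<and> (\<exists>D>0. \<exists>d. 0 < d \<and> d < 1 \<and>
              (\<forall>n::nat. measure M {\<omega>\<in>space M. \<bar>\<theta> \<omega>\<bar> \<ge> ereal (real n)} \<le> D * d ^ n))"
proof -
  interpret prob_space M by fact
  let ?V = "insert None (Some ` symA)"
  define Y where "Y t \<omega> = Yvar P a1 a2 (U t \<omega>)" for t \<omega>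
  have indep: "indep_vars (\<lambda>_. count_space UNIV) Y UNIV"
    unfolding Y_def using assms(2) measurable_Yvar by (rule indep_vars_compose2)
  have dist: "prob {\<omega>\<in>space M. Y t \<omega> = v} = symbol_prob P v" if "v \<in> ?V" for t v
    using assms(2,3) unfolding Y_def
    by (intro prob_Yvar_eq assms(4,5,8) that) (simp_all add: indep_vars_def)
  have "\<sigma> < alpha P 1"
    using assms(9) INF_skel_p_le_alpha[OF assms(8), of 1 \<sigma>] by (simp add: symA_def)
  moreover have "alpha P 1 \<le> alpha_m1 P"
    using alpha_nonneg[OF assms(8), of "-1"] by (simp add: alpha_m1_def symA_def)
  ultimately obtain \<eta> \<rho> where rate: "0 \<le> \<eta>" "0 < \<rho>" "\<rho> < 1"
    "alpha P 1 * exp (- \<eta> * (1 - \<sigma>)) + (1 - alpha P 1) * exp (\<eta> * \<sigma>) \<le> \<rho>"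
    "(1 - alpha_m1 P) * exp \<eta> \<le> \<rho>"
    using exists_contraction_rate alpha_m1_le_one[OF assms(8)] assms(6) by (metis less_imp_le)
  have Y_in: "Y t \<omega> \<in> ?V" for t \<omega>
    using assms(4) by (auto simp: Y_def Yvar_def)
  have tail: "measure M {\<omega>\<in>space M. ereal (real n) \<le> \<bar>theta_bar \<sigma> (\<lambda>t. Y t \<omega>) 0\<bar>} \<le> \<rho> ^ n" for n
    by (rule prob_theta_bar_tail_le[where V = ?V and \<eta> = \<eta>, OF indep dist])
      (use Y_in rate assms(7) in \<open>auto simp: symbol_prob_def symA_def\<close>)
  have meas: "(\<lambda>\<omega>. theta_bar \<sigma> (\<lambda>t. Y t \<omega>) 0) \<in> borel_measurable M"
    using indep by (intro theta_bar_measurable) (simp add: indep_vars_def)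
  moreover have "(\<integral>\<^sup>+ \<omega>. e2ennreal \<bar>theta_bar \<sigma> (\<lambda>t. Y t \<omega>) 0\<bar> \<partial>M) < \<infinity>"
    using rate tail by (intro nn_integral_abs_finite_if_geometric_tail[OF meas, of 1 \<rho>]) auto
  ultimately show ?thesis
    unfolding Let_def Y_def[symmetric] using rate tail
    by (intro conjI exI[of _ "1::real"] exI[of _ \<rho>]) auto
qed

end
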